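(* Let $q>1$ be an integer reducer capacity and consider $m$ inputs each of size one. Then every A2A mapping schema for these inputs has communication cost at least $m\left\lfloor\frac{m-1}{q-1}\right\rfloor$ and uses at least $\left\lfloor\frac{m}{q}\right\rfloor\left\lfloor\frac{m-1}{q-1}\right\rfloor$ reducers.
   Context: An A2A mapping schema for inputs with sizes $w_1,\dots,w_m$ and reducer capacity $q$ is an assignment of the inputs to a collection of reducers (each input may go to several reducers) such that every reducer receives inputs of total size at most $q$ and every pair of distinct inputs is assigned together to at least one reducer. The communication cost is the sum over reducers of the total size of the inputs assigned to it. *)

theory Defs
  imports Main
begin

text \<open>Inputs are indexed by 0..<m with sizes w i; a mapping schema is a finite list of
reducers, each reducer being the set of inputs assigned to it (an input may go to several
reducers; reducers with identical input sets are counted separately).\<close>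

definition a2a_schema :: "(nat \<Rightarrow> nat) \<Rightarrow> nat \<Rightarrow> nat \<Rightarrow> nat set list \<Rightarrow> bool" where
  "a2a_schema w q m R \<longleftrightarrow>
     (\<forall>r\<in>set R. r \<subseteq> {..<m} \<and> (\<Sum>i\<in>r. w i) \<le> q) \<and>
     (\<forall>i<m. \<forall>j<m. i \<noteq> j \<longrightarrow> (\<exists>r\<in>set R. i \<in> r \<and> j \<in> r))"

definition comm_cost :: "(nat \<Rightarrow> nat) \<Rightarrow> nat set list \<Rightarrow> nat" where
  "comm_cost w R = sum_list (map (\<lambda>r. \<Sum>i\<in>r. w i) R)"

end

theory Submission
  imports Defs
begin

text \<open>Fix an input \<open>i\<close>. Every other input must meet \<open>i\<close> in some reducer, and a reducer
containing \<open>i\<close> has room for at most \<open>q - 1\<close> further inputs, so \<open>i\<close> is sent to at least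
\<open>\<lfloor>(m-1)/(q-1)\<rfloor>\<close> reducers. Summing over the \<open>m\<close> inputs bounds the communication cost, and
since every reducer carries at most \<open>q\<close> units of it, dividing by \<open>q\<close> (after replacing \<open>m\<close>
by \<open>q\<lfloor>m/q\<rfloor>\<close>) bounds the number of reducers.\<close>

definition replication :: "'a set list \<Rightarrow> 'a \<Rightarrow> nat" where
  "replication R i = length (filter (\<lambda>r. i \<in> r) R)"

lemma card_Union_set_le_sum_list: "card (\<Union>(set L)) \<le> (\<Sum>r\<leftarrow>L. card r)"
proof (induction L)
  case (Cons a L)
  have "card (\<Union>(set (a # L))) \<le> card a + card (\<Union>(set L))"
    by (simp add: card_Un_le)
  with Cons show ?case by simp
qed simp

lemma sum_list_card_eq_sum_replication:
  assumes "finite A" and "\<forall>r\<in>set R. r \<subseteq> A"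
  shows "(\<Sum>r\<leftarrow>R. card r) = (\<Sum>i\<in>A. replication R i)"
  using assms(2)
proof (induction R)
  case Nil
  then show ?case by (simp add: replication_def)
next
  case (Cons a R)
  have "card a = (\<Sum>i\<in>A. of_bool (i \<in> a))"
    using Cons.prems assms(1) by (simp add: Int_absorb1 flip: sum.inter_filter)
  moreover have "replication (a # R) i = of_bool (i \<in> a) + replication R i" for i
    by (simp add: replication_def)
  ultimately show ?case
    using Cons by (simp add: sum.distrib)
qed

lemma card_minus_le_replication:
  assumes "\<forall>r\<in>set R. finite r \<and> card r \<le> q"
    and "\<forall>j\<in>A - {i}. \<exists>r\<in>set R. i \<in> r \<and> j \<in> r"
  shows "card (A - {i}) \<le> replication R i * (q - 1)"
proof -
  define L where "L = map (\<lambda>r. r - {i}) (filter (\<lambda>r. i \<in> r) R)"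
  have others: "finite r \<and> card r \<le> q - 1" if "r \<in> set L" for r
  proof -
    from that obtain s where "s \<in> set R" "i \<in> s" "r = s - {i}"
      by (auto simp: L_def)
    with assms(1) show ?thesis
      by (simp add: card_Diff_singleton diff_le_mono)
  qed
  have "A - {i} \<subseteq> \<Union>(set L)"
  proof
    fix j assume "j \<in> A - {i}"
    with assms(2) obtain r where "r \<in> set R" "i \<in> r" "j \<in> r - {i}"
      by blast
    then show "j \<in> \<Union>(set L)"
      by (auto simp: L_def)
  qed
  then have "card (A - {i}) \<le> card (\<Union>(set L))"
    using others by (intro card_mono) auto
  also have "\<dots> \<le> (\<Sum>r\<leftarrow>L. card r)"
    by (rule card_Union_set_le_sum_list)
  also have "\<dots> \<le> (\<Sum>r\<leftarrow>L. q - 1)"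
    using others by (intro sum_list_mono) blast
  also have "\<dots> = replication R i * (q - 1)"
    by (simp add: L_def replication_def comp_def sum_list_triv)
  finally show ?thesis .
qed

lemma comm_cost_unit: "comm_cost (\<lambda>_. 1) R = (\<Sum>r\<leftarrow>R. card r)"
  by (simp add: comm_cost_def)

lemma a2a_schema_unit_iff:
  "a2a_schema (\<lambda>_. 1) q m R \<longleftrightarrow>
     (\<forall>r\<in>set R. r \<subseteq> {..<m} \<and> card r \<le> q) \<and>
     (\<forall>i<m. \<forall>j<m. i \<noteq> j \<longrightarrow> (\<exists>r\<in>set R. i \<in> r \<and> j \<in> r))"
  by (simp add: a2a_schema_def)

lemma a2a_schema_unit_replication:
  assumes "q > 1" and "a2a_schema (\<lambda>_. 1) q m R" and "i < m"
  shows "(m - 1) div (q - 1) \<le> replication R i"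
proof -
  \<comment> \<open>Unfold before simplifying: \<open>simp\<close> rewrites \<open>\<lambda>_. 1\<close> to \<open>\<lambda>_. Suc 0\<close>, which the rule no longer matches.\<close>
  note schema = assms(2)[unfolded a2a_schema_unit_iff]
  have "\<forall>r\<in>set R. finite r \<and> card r \<le> q"
    using schema by (meson finite_lessThan finite_subset)
  moreover have "\<forall>j\<in>{..<m} - {i}. \<exists>r\<in>set R. i \<in> r \<and> j \<in> r"
    using schema assms(3) by auto
  ultimately have "card ({..<m} - {i}) \<le> replication R i * (q - 1)"
    by (rule card_minus_le_replication)
  then have "m - 1 \<le> replication R i * (q - 1)"
    using assms(3) by simp
  then have "(m - 1) div (q - 1) \<le> replication R i * (q - 1) div (q - 1)"
    by (rule div_le_mono)
  then show ?thesis
    using assms(1) by (simp only: nonzero_mult_div_cancel_right)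
qed

lemma sum_list_card_le_length_mult:
  assumes "\<forall>r\<in>set R. card r \<le> q"
  shows "(\<Sum>r\<leftarrow>R. card r) \<le> length R * q"
proof -
  have "(\<Sum>r\<leftarrow>R. card r) \<le> (\<Sum>r\<leftarrow>R. q)"
    using assms by (intro sum_list_mono) simp
  then show ?thesis
    by (simp add: sum_list_triv)
qed

theorem theorem6:
  fixes q m :: nat and R :: "nat set list"
  assumes "q > 1"
    and "a2a_schema (\<lambda>_. 1) q m R"
  shows "comm_cost (\<lambda>_. 1) R \<ge> m * ((m - 1) div (q - 1))
         \<and> length R \<ge> (m div q) * ((m - 1) div (q - 1))"
proof -
  define k where "k = (m - 1) div (q - 1)"
  have reducers: "\<forall>r\<in>set R. r \<subseteq> {..<m} \<and> card r \<le> q"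
    using assms(2)[unfolded a2a_schema_unit_iff] by blast
  have "m * k \<le> (\<Sum>i<m. replication R i)"
    using sum_mono[of "{..<m}" "\<lambda>_. k" "replication R"]
      a2a_schema_unit_replication[OF assms] by (simp add: k_def)
  also have "\<dots> = (\<Sum>r\<leftarrow>R. card r)"
    using reducers by (intro sum_list_card_eq_sum_replication[symmetric]) auto
  finally have cost: "m * k \<le> (\<Sum>r\<leftarrow>R. card r)" .
  have "m div q * k * q = (m div q * q) * k"
    by (simp only: ac_simps)
  also have "\<dots> \<le> m * k"
    by (intro mult_le_mono1 div_times_less_eq_dividend)
  also have "\<dots> \<le> length R * q"
    using cost reducers sum_list_card_le_length_mult[of R q] by simp
  finally have "m div q * k \<le> length R"
    using assms(1) by (simp only: mult_le_cancel2)
  with cost show ?thesis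
    unfolding comm_cost_unit k_def by blast
qed

end
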